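(* Let $r\ge 2$ and $1\le p\le r-1$ be integers, let $H=(V,\mathcal{E})$ be an $r$-uniform hypergraph, and let $V_1,\dots,V_k$ be (not necessarily disjoint) subsets of $V$ with $\bigcup_{i=1}^k V_i = V$. Let $H_i = H[V_i]$ for $1\le i\le k$. Then \[\overrightarrow{\Gamma}_p(H) \le \sum_{i=1}^k \overrightarrow{\Gamma}_p(H_i).\]
   Context: For $U\subseteq V$, the induced subhypergraph $H[U]$ has vertex set $U$ and edge set consisting of all $E\in\mathcal{E}$ with $E\subseteq U$. An orientation $D$ of an $r$-uniform hypergraph $H=(V,\mathcal{E})$ assigns to each edge exactly one of the $r!$ linear orderings of its elements. A set $S\subseteq V$ is a directed $p$-dominating set of $D$ if for every vertex $u\in V\setminus S$ there is an edge $E$ with $u\in E$ whose first $p$ vertices (in the ordering given by $D$) all lie in $S$; if $H$ has no edges containing $u$, then $u$ must lie in $S$ (e.g. for an edgeless hypergraph $S=V$ is forced). $\overrightarrow{\gamma}_p(D)$ is the minimum cardinality of a directed $p$-dominating set of $D$, and $\overrightarrow{\Gamma}_p(H)$ is the maximum of $\overrightarrow{\gamma}_p(D)$ over all orientations $D$ of $H$. *)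

theory Defs
  imports Main
begin

definition uniform_hypergraph :: "nat \<Rightarrow> 'a set \<Rightarrow> 'a set set \<Rightarrow> bool" where
  "uniform_hypergraph r V E \<longleftrightarrow> finite V \<and> (\<forall>e\<in>E. e \<subseteq> V \<and> card e = r)"

definition induced_edges :: "'a set set \<Rightarrow> 'a set \<Rightarrow> 'a set set" where
  "induced_edges E U = {e \<in> E. e \<subseteq> U}"

text \<open>An orientation assigns to each edge a linear ordering of its elements (a distinct list
  enumerating it); for definiteness it is the empty list outside the edge set.\<close>
definition orientations :: "'a set set \<Rightarrow> ('a set \<Rightarrow> 'a list) set" where
  "orientations E = {D. (\<forall>e\<in>E. distinct (D e) \<and> set (D e) = e) \<and> (\<forall>e. e \<notin> E \<longrightarrow> D e = [])}"

definition dir_p_dominating :: "nat \<Rightarrow> 'a set \<Rightarrow> 'a set set \<Rightarrow> ('a set \<Rightarrow> 'a list) \<Rightarrow> 'a set \<Rightarrow> bool" where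
  "dir_p_dominating p V E D S \<longleftrightarrow> S \<subseteq> V \<and>
     (\<forall>u \<in> V - S. \<exists>e\<in>E. u \<in> e \<and> set (take p (D e)) \<subseteq> S)"

definition dir_gamma :: "nat \<Rightarrow> 'a set \<Rightarrow> 'a set set \<Rightarrow> ('a set \<Rightarrow> 'a list) \<Rightarrow> nat" where
  "dir_gamma p V E D = (LEAST n. \<exists>S. dir_p_dominating p V E D S \<and> card S = n)"

definition dir_Gamma :: "nat \<Rightarrow> 'a set \<Rightarrow> 'a set set \<Rightarrow> nat" where
  "dir_Gamma p V E = Max ((\<lambda>D. dir_gamma p V E D) ` orientations E)"

end

theory Submission
  imports Defs
begin

text \<open>Fix an orientation \<open>D\<close> of \<open>H\<close>. Restricting \<open>D\<close> to the edges inside \<open>V\<^sub>i\<close> gives an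
  orientation \<open>D\<^sub>i\<close> of \<open>H[V\<^sub>i]\<close>; choose a minimum directed \<open>p\<close>-dominating set \<open>S\<^sub>i\<close> of \<open>D\<^sub>i\<close>.
  A vertex \<open>u \<notin> \<Union>S\<^sub>i\<close> lies in some \<open>V\<^sub>i\<close> and is dominated there by an edge of \<open>H[V\<^sub>i]\<close> whose
  first \<open>p\<close> vertices lie in \<open>S\<^sub>i\<close>; that edge, ordered by \<open>D\<close>, dominates \<open>u\<close> in \<open>D\<close> as well. Hence
  \<open>\<gamma>\<^sub>p(D) \<le> \<Sum> |S\<^sub>i| \<le> \<Sum> \<Gamma>\<^sub>p(H\<^sub>i)\<close>. The argument works for every \<open>p\<close> and does not use uniformity
  beyond the finiteness of \<open>V\<close>.\<close>

lemma dir_p_dominating_whole: "dir_p_dominating p V E D V"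
  by (simp add: dir_p_dominating_def)

lemma dir_gamma_le_card:
  assumes "dir_p_dominating p V E D S"
  shows "dir_gamma p V E D \<le> card S"
  unfolding dir_gamma_def using assms by (intro Least_le) blast

lemma dir_gamma_attained:
  obtains S where "dir_p_dominating p V E D S" "card S = dir_gamma p V E D"
proof -
  have "\<exists>n S. dir_p_dominating p V E D S \<and> card S = n"
    using dir_p_dominating_whole by blast
  from LeastI_ex[OF this] show ?thesis
    using that unfolding dir_gamma_def by blast
qed

lemma finite_dir_gamma_image:
  assumes "finite V"
  shows "finite ((\<lambda>D. dir_gamma p V E D) ` orientations E)"
proof (rule finite_subset)
  show "(\<lambda>D. dir_gamma p V E D) ` orientations E \<subseteq> {..card V}"
    using dir_gamma_le_card[OF dir_p_dominating_whole] by auto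
qed simp

lemma orientations_nonempty:
  assumes "\<forall>e\<in>E. finite e"
  shows "orientations E \<noteq> {}"
proof -
  define D where "D = (\<lambda>e. if e \<in> E then SOME xs. distinct xs \<and> set xs = e else [])"
  have "distinct (D e) \<and> set (D e) = e" if "e \<in> E" for e
  proof -
    have "\<exists>xs. distinct xs \<and> set xs = e"
      using finite_distinct_list[of e] assms that by blast
    then show ?thesis
      unfolding D_def using that by (metis (mono_tags, lifting) someI_ex)
  qed
  then have "D \<in> orientations E"
    unfolding orientations_def D_def by auto
  then show ?thesis by blast
qed

lemma dir_gamma_le_dir_Gamma:
  assumes "finite V" "D \<in> orientations E"
  shows "dir_gamma p V E D \<le> dir_Gamma p V E"
  unfolding dir_Gamma_def using finite_dir_gamma_image[OF assms(1)] assms(2) by (intro Max_ge) auto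

lemma dir_Gamma_le:
  assumes "finite V" "\<forall>e\<in>E. e \<subseteq> V"
    and "\<And>D. D \<in> orientations E \<Longrightarrow> dir_gamma p V E D \<le> m"
  shows "dir_Gamma p V E \<le> m"
proof -
  have "orientations E \<noteq> {}"
    using assms(1,2) by (intro orientations_nonempty) (auto intro: finite_subset)
  then show ?thesis
    unfolding dir_Gamma_def using finite_dir_gamma_image[OF assms(1)] assms(3)
    by (subst Max_le_iff) auto
qed

definition orientation_restrict :: "('a set \<Rightarrow> 'a list) \<Rightarrow> 'a set \<Rightarrow> 'a set \<Rightarrow> 'a list" where
  "orientation_restrict D U = (\<lambda>e. if e \<subseteq> U then D e else [])"

lemma orientation_restrict_in_orientations:
  assumes "D \<in> orientations E"
  shows "orientation_restrict D U \<in> orientations (induced_edges E U)"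
  using assms unfolding orientations_def orientation_restrict_def induced_edges_def by auto

lemma dir_p_dominating_UN:
  assumes cover: "(\<Union>i\<in>I. Vs i) = V"
    and dom: "\<And>i. i \<in> I \<Longrightarrow>
      dir_p_dominating p (Vs i) (induced_edges E (Vs i)) (orientation_restrict D (Vs i)) (S i)"
  shows "dir_p_dominating p V E D (\<Union>i\<in>I. S i)"
  unfolding dir_p_dominating_def
proof (intro conjI ballI)
  show "(\<Union>i\<in>I. S i) \<subseteq> V"
    using dom cover by (fastforce simp: dir_p_dominating_def)
  fix u assume u: "u \<in> V - (\<Union>i\<in>I. S i)"
  then obtain i where i: "i \<in> I" "u \<in> Vs i" "u \<notin> S i"
    using cover by auto
  then obtain e where "e \<in> induced_edges E (Vs i)" "u \<in> e"
      "set (take p (orientation_restrict D (Vs i) e)) \<subseteq> S i"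
    using dom[OF i(1)] unfolding dir_p_dominating_def by blast
  then have "e \<in> E" "u \<in> e" "set (take p (D e)) \<subseteq> (\<Union>i\<in>I. S i)"
    using i(1) by (auto simp: induced_edges_def orientation_restrict_def)
  then show "\<exists>e\<in>E. u \<in> e \<and> set (take p (D e)) \<subseteq> (\<Union>i\<in>I. S i)" by blast
qed

lemma dir_gamma_le_sum_restrict:
  assumes "finite I" "(\<Union>i\<in>I. Vs i) = V"
  shows "dir_gamma p V E D
    \<le> (\<Sum>i\<in>I. dir_gamma p (Vs i) (induced_edges E (Vs i)) (orientation_restrict D (Vs i)))"
proof -
  define D' where "D' i = orientation_restrict D (Vs i)" for i
  have "\<forall>i. \<exists>S. dir_p_dominating p (Vs i) (induced_edges E (Vs i)) (D' i) S
      \<and> card S = dir_gamma p (Vs i) (induced_edges E (Vs i)) (D' i)"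
    by (metis dir_gamma_attained)
  then obtain S where S: "\<And>i. dir_p_dominating p (Vs i) (induced_edges E (Vs i)) (D' i) (S i)"
      "\<And>i. card (S i) = dir_gamma p (Vs i) (induced_edges E (Vs i)) (D' i)"
    by metis
  have "dir_gamma p V E D \<le> card (\<Union>i\<in>I. S i)"
    using dir_p_dominating_UN[OF assms(2)] S(1) unfolding D'_def
    by (intro dir_gamma_le_card) blast
  also have "\<dots> \<le> (\<Sum>i\<in>I. card (S i))"
    by (rule card_UN_le[OF assms(1)])
  finally show ?thesis
    using S(2) unfolding D'_def by simp
qed

theorem mainTheorem3:
  fixes r p k :: nat and V :: "'a set" and E :: "'a set set" and Vs :: "nat \<Rightarrow> 'a set"
  assumes "r \<ge> 2" and "1 \<le> p" and "p \<le> r - 1"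
    and "uniform_hypergraph r V E"
    and "\<forall>i\<in>{1..k}. Vs i \<subseteq> V"
    and "(\<Union>i\<in>{1..k}. Vs i) = V"
  shows "dir_Gamma p V E \<le> (\<Sum>i=1..k. dir_Gamma p (Vs i) (induced_edges E (Vs i)))"
proof (rule dir_Gamma_le)
  show finV: "finite V" and "\<forall>e\<in>E. e \<subseteq> V"
    using assms(4) by (simp_all add: uniform_hypergraph_def)
  fix D assume D: "D \<in> orientations E"
  have "dir_gamma p V E D
    \<le> (\<Sum>i=1..k. dir_gamma p (Vs i) (induced_edges E (Vs i)) (orientation_restrict D (Vs i)))"
    using assms(6) by (intro dir_gamma_le_sum_restrict) simp_all
  also have "\<dots> \<le> (\<Sum>i=1..k. dir_Gamma p (Vs i) (induced_edges E (Vs i)))"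
  proof (rule sum_mono)
    fix i assume "i \<in> {1..k}"
    then have "finite (Vs i)"
      using assms(5) finV finite_subset by blast
    then show "dir_gamma p (Vs i) (induced_edges E (Vs i)) (orientation_restrict D (Vs i))
        \<le> dir_Gamma p (Vs i) (induced_edges E (Vs i))"
      using D by (intro dir_gamma_le_dir_Gamma orientation_restrict_in_orientations)
  qed
  finally show "dir_gamma p V E D \<le> (\<Sum>i=1..k. dir_Gamma p (Vs i) (induced_edges E (Vs i)))" .
qed

end
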